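(* Under the same setting, with probability at least $1-(1/2)^d$ the BACON Sketch estimate satisfies $$\hat{E}_{dst} \le E_{dst} + 2m\left(1-e^{-n/(mw)}\right).$$
   Context: BACON Sketch: a $d\times w\times m$ array of bits, organised as $d$ rows, each row consisting of $w$ Bitmap registers of $m$ bits, all initially $0$. It uses a hash function $h_{bm}$ mapping source IPs to $\{0,\dots,m-1\}$ and $d$ pairwise-independent hash functions $h^1_{cm},\dots,h^d_{cm}$ mapping destination IPs to $\{0,\dots,w-1\}$. Update: for each packet with source $src$ and destination $dst$, for each row $i$, the bit with index $h_{bm}(src)$ inside the Bitmap register number $h^i_{cm}(dst)$ of row $i$ is set to $1$. Query: for destination $dst$, $E_i$ is the number of $1$-bits in Bitmap register $h^i_{cm}(dst)$ of row $i$, and $\hat{E}_{dst}=\min_i E_i$. In a time interval, $n$ is the number of distinct source IPs, $E_{dst}$ is the true number of distinct source IPs contacting destination $dst$. Modelling assumptions: hash values uniform and independent across distinct inputs and rows; the expected number of distinct elements from other destinations colliding into the register of $dst$ in a row is $(n-E_{dst})/w$; with $m$ large, the expected number of $1$-bits in a register receiving $k$ distinct sources is $m(1-e^{-k/m})$; the pure Bitmap estimate (without collisions) $\hat{E}^{Bitmap}_{dst}$ satisfies $\hat{E}^{Bitmap}_{dst}\le E_{dst}$. *)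

theory Defs
  imports "HOL-Probability.Probability"
begin

text \<open>Traffic of one time interval: the finite set P of (source, destination) pairs
  observed (duplicate packets are irrelevant for the sketch).\<close>

definition srcs_of :: "('s \<times> 'd) set \<Rightarrow> 'd \<Rightarrow> 's set" where
  "srcs_of P dst = {s. (s, dst) \<in> P}"

definition true_card :: "('s \<times> 'd) set \<Rightarrow> 'd \<Rightarrow> nat" where
  "true_card P dst = card (srcs_of P dst)"

definition num_sources :: "('s \<times> 'd) set \<Rightarrow> nat" where
  "num_sources P = card (fst ` P)"

text \<open>Indices of the 1-bits of the Bitmap register hc(dst) of one row
  (hb = h_bm, hc = h^i_cm of that row), after processing all packets of P.\<close>
definition reg_bits :: "('s \<Rightarrow> nat) \<Rightarrow> ('d \<Rightarrow> nat) \<Rightarrow> ('s \<times> 'd) set \<Rightarrow> 'd \<Rightarrow> nat set" where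
  "reg_bits hb hc P dst = {hb s | s t. (s, t) \<in> P \<and> hc t = hc dst}"

definition row_est :: "('s \<Rightarrow> nat) \<Rightarrow> ('d \<Rightarrow> nat) \<Rightarrow> ('s \<times> 'd) set \<Rightarrow> 'd \<Rightarrow> nat" where
  "row_est hb hc P dst = card (reg_bits hb hc P dst)"

definition bacon_est :: "('s \<Rightarrow> nat) \<Rightarrow> (nat \<Rightarrow> 'd \<Rightarrow> nat) \<Rightarrow> nat \<Rightarrow> ('s \<times> 'd) set \<Rightarrow> 'd \<Rightarrow> nat" where
  "bacon_est hb hcm d P dst = Min {row_est hb (hcm i) P dst | i. i < d}"

definition colliders :: "('d \<Rightarrow> nat) \<Rightarrow> ('s \<times> 'd) set \<Rightarrow> 'd \<Rightarrow> 's set" where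
  "colliders hc P dst = {s. \<exists>t. (s, t) \<in> P \<and> hc t = hc dst} - srcs_of P dst"

definition collision_bits :: "('s \<Rightarrow> nat) \<Rightarrow> ('d \<Rightarrow> nat) \<Rightarrow> ('s \<times> 'd) set \<Rightarrow> 'd \<Rightarrow> nat" where
  "collision_bits hb hc P dst = card (hb ` colliders hc P dst)"

end

theory Submission
  imports Defs
begin

text \<open>In each row the register of dst contains at most the E_dst bits of its own sources plus
  the bits set by colliding sources, and by the modelling assumptions the latter have mean at
  most half of the error bound 2m(1 - e^(-n/(mw))). By Markov's inequality a single row exceeds
  the bound with probability at most 1/2; the rows are independent, so all d rows exceed it
  with probability at most (1/2)^d, and otherwise the minimum over the rows is within the
  bound.\<close>

lemma measurable_restrict_finite:
  fixes h :: "'a \<Rightarrow> 'x \<Rightarrow> nat" and g :: "('x \<Rightarrow> nat) \<Rightarrow> 'b"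
  assumes fin: "finite X"
    and h: "\<And>x. x \<in> X \<Longrightarrow> (\<lambda>\<omega>. h \<omega> x) \<in> measurable M (count_space UNIV)"
  shows "(\<lambda>\<omega>. g (restrict (h \<omega>) X)) \<in> measurable M (count_space UNIV)"
proof -
  have countable: "countable (X \<rightarrow>\<^sub>E (UNIV :: nat set))"
    by (rule countable_PiE) (auto simp: fin)
  have "(\<lambda>\<omega>. restrict (h \<omega>) X) \<in> measurable M (count_space (X \<rightarrow>\<^sub>E UNIV))"
    unfolding measurable_count_space_eq_countable[OF countable]
  proof (intro conjI ballI)
    show "(\<lambda>\<omega>. restrict (h \<omega>) X) \<in> space M \<rightarrow> X \<rightarrow>\<^sub>E UNIV" by auto
  next
    fix a :: "'x \<Rightarrow> nat" assume a: "a \<in> X \<rightarrow>\<^sub>E UNIV"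
    have "(\<lambda>\<omega>. restrict (h \<omega>) X) -` {a} \<inter> space M = {\<omega> \<in> space M. \<forall>x\<in>X. h \<omega> x = a x}"
      using a by (auto simp: fun_eq_iff restrict_def PiE_def extensional_def)
    moreover have "Measurable.pred M (\<lambda>\<omega>. \<forall>x\<in>X. h \<omega> x = a x)"
      by (rule pred_intros_finite(3)[OF fin]) (rule pred_count_space_const1[OF h])
    ultimately show "(\<lambda>\<omega>. restrict (h \<omega>) X) -` {a} \<inter> space M \<in> sets M"
      by (simp add: pred_def)
  qed
  moreover have "g \<in> measurable (count_space (X \<rightarrow>\<^sub>E UNIV)) (count_space UNIV)" by simp
  ultimately show ?thesis by (rule measurable_compose)
qed

lemma reg_bits_cong:
  assumes "\<forall>s\<in>fst ` P. hb s = hb' s" and "\<forall>t\<in>insert dst (snd ` P). hc t = hc' t"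
  shows "reg_bits hb hc P dst = reg_bits hb' hc' P dst"
proof -
  have "\<And>s t. (s, t) \<in> P \<Longrightarrow> hb s = hb' s \<and> hc t = hc' t \<and> hc dst = hc' dst"
    using assms by (force intro: rev_image_eqI)
  then show ?thesis unfolding reg_bits_def by metis
qed

lemma bacon_est_cong:
  assumes "\<forall>s\<in>fst ` P. hb s = hb' s" and "\<forall>i<d. \<forall>t\<in>insert dst (snd ` P). hc i t = hc' i t"
  shows "bacon_est hb hc d P dst = bacon_est hb' hc' d P dst"
proof -
  have "\<And>i. i < d \<Longrightarrow> row_est hb (hc i) P dst = row_est hb' (hc' i) P dst"
    unfolding row_est_def using reg_bits_cong[OF assms(1)] assms(2) by metis
  then have "{row_est hb (hc i) P dst | i. i < d} = {row_est hb' (hc' i) P dst | i. i < d}"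
    by (auto; metis)
  then show ?thesis unfolding bacon_est_def by simp
qed

lemma measurable_bacon_est:
  fixes hbm :: "'a \<Rightarrow> 's \<Rightarrow> nat" and hcm :: "'a \<Rightarrow> nat \<Rightarrow> 'd \<Rightarrow> nat"
  assumes "finite P"
    and hbm: "\<And>s. (\<lambda>\<omega>. hbm \<omega> s) \<in> measurable M (count_space UNIV)"
    and hcm: "\<And>i t. (\<lambda>\<omega>. hcm \<omega> i t) \<in> measurable M (count_space UNIV)"
  shows "(\<lambda>\<omega>. bacon_est (hbm \<omega>) (hcm \<omega>) d P dst) \<in> measurable M (count_space UNIV)"
proof -
  \<comment> \<open>The estimate only reads the finitely many hash values indexed by X.\<close>
  define h where "h = (\<lambda>\<omega>. case_sum (hbm \<omega>) (\<lambda>(i, t). hcm \<omega> i t))"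
  define X where "X = Inl ` fst ` P \<union> Inr ` ({..<d} \<times> insert dst (snd ` P))"
  define g where "g = (\<lambda>r. bacon_est (\<lambda>s. r (Inl s)) (\<lambda>i t. r (Inr (i, t))) d P dst)"
  have "finite X" unfolding X_def using \<open>finite P\<close> by auto
  moreover have "(\<lambda>\<omega>. h \<omega> x) \<in> measurable M (count_space UNIV)" for x
    unfolding h_def using hbm hcm by (cases x) (auto split: prod.split)
  moreover have "bacon_est (hbm \<omega>) (hcm \<omega>) d P dst = g (restrict (h \<omega>) X)" for \<omega>
    unfolding g_def by (rule bacon_est_cong) (auto simp: X_def h_def)
  ultimately show ?thesis by (simp add: measurable_restrict_finite)
qed

lemma row_est_le_true_card_collision_bits:
  assumes "finite P"
  shows "row_est hb hc P dst \<le> true_card P dst + collision_bits hb hc P dst"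
proof -
  have fin_srcs: "finite (srcs_of P dst)"
    by (rule finite_subset[of _ "fst ` P"]) (auto simp: srcs_of_def assms intro: rev_image_eqI)
  have fin_colliders: "finite (colliders hc P dst)"
    by (rule finite_subset[of _ "fst ` P"]) (auto simp: colliders_def assms intro: rev_image_eqI)
  have "reg_bits hb hc P dst \<subseteq> hb ` srcs_of P dst \<union> hb ` colliders hc P dst"
    unfolding reg_bits_def srcs_of_def colliders_def by blast
  then have "row_est hb hc P dst \<le> card (hb ` srcs_of P dst \<union> hb ` colliders hc P dst)"
    unfolding row_est_def using fin_srcs fin_colliders by (intro card_mono) auto
  also have "\<dots> \<le> card (hb ` srcs_of P dst) + card (hb ` colliders hc P dst)"
    by (rule card_Un_le)
  also have "\<dots> \<le> true_card P dst + collision_bits hb hc P dst"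
    unfolding true_card_def collision_bits_def using card_image_le[OF fin_srcs] by simp
  finally show ?thesis .
qed

lemma bacon_est_le_true_card_collision_bits:
  assumes "finite P" and "i < d"
  shows "bacon_est hb hc d P dst \<le> true_card P dst + collision_bits hb (hc i) P dst"
proof -
  have "bacon_est hb hc d P dst \<le> row_est hb (hc i) P dst"
    unfolding bacon_est_def using \<open>i < d\<close> by (intro Min_le) auto
  also have "\<dots> \<le> true_card P dst + collision_bits hb (hc i) P dst"
    using \<open>finite P\<close> by (rule row_est_le_true_card_collision_bits)
  finally show ?thesis .
qed

lemma collision_bits_le:
  assumes "\<And>s. hb s < m"
  shows "collision_bits hb hc P dst \<le> m"
proof -
  have "hb ` colliders hc P dst \<subseteq> {..<m}" using assms by auto
  then show ?thesis unfolding collision_bits_def using card_mono[of "{..<m}"] by fastforce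
qed

lemma collision_mean_le:
  fixes m w n E :: real
  assumes "m > 0" and "w > 0" and "E \<ge> 0"
  shows "m * (1 - exp (- ((n - E) / w) / m)) \<le> m * (1 - exp (- n / (m * w)))"
proof -
  have "- n / (m * w) \<le> - ((n - E) / w) / m"
    using assms by (simp add: field_simps)
  then show ?thesis using \<open>m > 0\<close> by simp
qed

lemma (in prob_space) prob_greater_le_half:
  fixes X :: "'a \<Rightarrow> real"
  assumes int: "integrable M X" and nonneg: "\<And>x. x \<in> space M \<Longrightarrow> 0 \<le> X x"
    and mean: "2 * expectation X \<le> T"
  shows "prob {x \<in> space M. X x > T} \<le> 1/2"
proof (cases "T > 0")
  case True
  have "prob {x \<in> space M. X x > T} \<le> prob {x \<in> space M. X x \<ge> T}"
    using borel_measurable_integrable[OF int] by (intro finite_measure_mono) auto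
  also have "\<dots> \<le> expectation X / T"
    using int nonneg True by (intro integral_Markov_inequality_measure[where A = "space M"]) auto
  also have "\<dots> \<le> 1/2"
    using mean True by (simp add: field_simps)
  finally show ?thesis .
next
  case False
  have "expectation X \<ge> 0" using nonneg by (intro integral_nonneg_AE AE_I2) auto
  with False mean have "T = 0" and "expectation X = 0" by auto
  then have "AE x in M. X x = 0"
    using integral_nonneg_eq_0_iff_AE[OF int] nonneg by auto
  then have "prob {x \<in> space M. X x > T} = 0"
    using \<open>T = 0\<close> by (intro prob_eq_0_AE) auto
  then show ?thesis by simp
qed

lemma (in prob_space) prob_exists_le_indep_vars:
  fixes X :: "'i \<Rightarrow> 'a \<Rightarrow> real"
  assumes indep: "indep_vars (\<lambda>_. borel) X I" and "finite I" and "I \<noteq> {}"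
    and tail: "\<And>i. i \<in> I \<Longrightarrow> prob {\<omega> \<in> space M. X i \<omega> > T} \<le> q"
  shows "prob {\<omega> \<in> space M. \<exists>i\<in>I. X i \<omega> \<le> T} \<ge> 1 - q ^ card I"
proof -
  define B where "B = (\<Inter>i\<in>I. X i -` {T<..} \<inter> space M)"
  have X_meas: "\<And>i. i \<in> I \<Longrightarrow> X i \<in> borel_measurable M"
    using indep unfolding indep_vars_def2 by auto
  have B_sets: "B \<in> sets M"
    unfolding B_def using X_meas \<open>I \<noteq> {}\<close> \<open>finite I\<close>
    by (intro sets.finite_INT) (auto intro: measurable_sets)
  have "prob B = (\<Prod>i\<in>I. prob (X i -` {T<..} \<inter> space M))"
    unfolding B_def using \<open>finite I\<close> \<open>I \<noteq> {}\<close> by (intro indep_varsD[OF indep]) auto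
  also have "\<dots> \<le> (\<Prod>i\<in>I. q)"
    using tail by (intro prod_mono) (auto simp: vimage_def Int_def conj_commute)
  finally have "prob B \<le> q ^ card I" by simp
  moreover have "{\<omega> \<in> space M. \<exists>i\<in>I. X i \<omega> \<le> T} = space M - B"
    unfolding B_def using \<open>I \<noteq> {}\<close> by (auto simp: not_less)
  ultimately show ?thesis using prob_compl[OF B_sets] by simp
qed

theorem theorem2:
  fixes M :: "'w measure"
    and hbm :: "'w \<Rightarrow> 's \<Rightarrow> nat"
    and hcm :: "'w \<Rightarrow> nat \<Rightarrow> 'd \<Rightarrow> nat"
    and P :: "('s \<times> 'd) set" and dst :: 'd
    and d m w :: nat
  assumes "prob_space M"
    and "finite P"
    and "d \<ge> 1" and "m \<ge> 1" and "w \<ge> 1"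
    and "\<And>\<omega> s. \<omega> \<in> space M \<Longrightarrow> hbm \<omega> s < m"
    and "\<And>\<omega> i t. \<omega> \<in> space M \<Longrightarrow> i < d \<Longrightarrow> hcm \<omega> i t < w"
    and "\<And>s. (\<lambda>\<omega>. hbm \<omega> s) \<in> measurable M (count_space UNIV)"
    and "\<And>i t. (\<lambda>\<omega>. hcm \<omega> i t) \<in> measurable M (count_space UNIV)"
    \<comment> \<open>modelling assumption: rows independent\<close>
    and "prob_space.indep_vars M (\<lambda>_. borel)
           (\<lambda>i \<omega>. real (collision_bits (hbm \<omega>) (hcm \<omega> i) P dst)) {..<d}"
    \<comment> \<open>modelling assumptions: (n - E_dst)/w expected colliders, each register
        receiving k distinct sources has m(1 - e^(-k/m)) expected 1-bits\<close>
    and "\<And>i. i < d \<Longrightarrow>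
           prob_space.expectation M (\<lambda>\<omega>. real (collision_bits (hbm \<omega>) (hcm \<omega> i) P dst))
           = m * (1 - exp (- ((real (num_sources P) - real (true_card P dst)) / w) / m))"
  shows "prob_space.prob M {\<omega> \<in> space M.
           real (bacon_est (hbm \<omega>) (hcm \<omega>) d P dst)
             \<le> real (true_card P dst) + 2 * m * (1 - exp (- real (num_sources P) / (m * w)))}
         \<ge> 1 - (1/2) ^ d"
proof -
  interpret prob_space M by fact
  define C where "C = (\<lambda>i \<omega>. real (collision_bits (hbm \<omega>) (hcm \<omega> i) P dst))"
  define T where "T = 2 * m * (1 - exp (- real (num_sources P) / (m * w)))"
  have indep: "indep_vars (\<lambda>_. borel) C {..<d}" using assms(10) unfolding C_def .
  have row_tail: "prob {\<omega> \<in> space M. C i \<omega> > T} \<le> 1/2" if "i < d" for i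
  proof (rule prob_greater_le_half)
    have "C i \<in> borel_measurable M" using indep \<open>i < d\<close> unfolding indep_vars_def2 by auto
    then show "integrable M (C i)"
      unfolding C_def
      by (intro integrable_const_bound[where B = m]) (auto intro!: AE_I2 collision_bits_le assms(6))
    show "2 * expectation (C i) \<le> T"
      using assms(4,5) assms(11)[OF \<open>i < d\<close>] collision_mean_le unfolding C_def T_def by simp
  qed (simp add: C_def)
  have "0 \<in> {..<d}" using assms(3) by simp
  then have "{..<d} \<noteq> {}" by blast
  then have "1 - (1/2) ^ d \<le> prob {\<omega> \<in> space M. \<exists>i\<in>{..<d}. C i \<omega> \<le> T}"
    using prob_exists_le_indep_vars[OF indep _ _ row_tail] by simp
  also have "\<dots> \<le> prob {\<omega> \<in> space M. real (bacon_est (hbm \<omega>) (hcm \<omega>) d P dst) \<le> true_card P dst + T}"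
  proof (rule finite_measure_mono)
    show "{\<omega> \<in> space M. \<exists>i\<in>{..<d}. C i \<omega> \<le> T}
        \<subseteq> {\<omega> \<in> space M. real (bacon_est (hbm \<omega>) (hcm \<omega>) d P dst) \<le> true_card P dst + T}"
    proof safe
      fix \<omega> i assume "\<omega> \<in> space M" "i < d" "C i \<omega> \<le> T"
      then show "real (bacon_est (hbm \<omega>) (hcm \<omega>) d P dst) \<le> true_card P dst + T"
        using bacon_est_le_true_card_collision_bits[OF assms(2) \<open>i < d\<close>,
            where hb = "hbm \<omega>" and hc = "hcm \<omega>" and dst = dst]
        unfolding C_def by linarith
    qed
    show "{\<omega> \<in> space M. real (bacon_est (hbm \<omega>) (hcm \<omega>) d P dst) \<le> true_card P dst + T} \<in> events"
      using measurable_bacon_est[OF assms(2,8,9)] by measurable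
  qed
  finally show ?thesis unfolding T_def .
qed

end
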